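(* Let $X = \{\sum_{k=0}^m d_k 10^{-k} : m \ge 0,\ d_k \in \{0,1,\dots,9\},\ d_0 \neq 0\}$ be the set of terminating decimals in $[1,10)$. Consider the game in which the casino chooses $x \in X$, the player chooses $y \in X$, and the casino wins if the first (leading) decimal digit of $xy$ is $1$, $2$ or $3$, i.e. $xy \in [1,4)\cup[10,40)$. For probability measures $\mu$ (casino) and $\nu$ (player) on the countable set $X$, let $P(\mu,\nu)=\sum_{x,y \in X} \mu\{x\}\nu\{y\}\,\mathbf 1[xy \in [1,4)\cup[10,40)]$. Then $$\sup_\mu \inf_\nu P(\mu,\nu) = \inf_\nu \sup_\mu P(\mu,\nu) = \log_{10} 4.$$ More precisely, for $n\ge1$ let $X_n\subseteq X$ be the terminating decimals in $[1,10)$ with exactly $n$ digits ($m=n-1$) and let $\beta_n$ be the probability measure on $X_n$ with $\beta_n\{x\} = \log_{10}(x + 10^{-(n-1)}) - \log_{10} x$. Then for every $\epsilon>0$ there is $N$ such that for all $n\ge N$: $P(\beta_n,\nu) \ge \log_{10}4 - \epsilon$ for every $\nu$, and $P(\mu,\beta_n) \le \log_{10}4+\epsilon$ for every $\mu$.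
   Context: This is the "multiplication game" in which players choose positive integers and the first digit of the product decides the winner; choosing integers is equivalent to choosing elements of $X$ (moving the decimal point does not affect the leading digit of the product). The casino maximizes and the player minimizes the casino's winning probability $P$. *)

theory Defs
  imports "HOL-Probability.Probability"
begin

definition decX :: "real set" where
  "decX = {(\<Sum>k=0..m. real (d k) / 10 ^ k) | m d. (\<forall>k. d k \<le> (9::nat)) \<and> d 0 \<noteq> 0}"

definition decXn :: "nat \<Rightarrow> real set" where
  "decXn n = {(\<Sum>k=0..n-1. real (d k) / 10 ^ k) | d. (\<forall>k. d k \<le> (9::nat)) \<and> d 0 \<noteq> 0}"

definition probsX :: "real pmf set" where
  "probsX = {p. set_pmf p \<subseteq> decX}"

definition casino_wins :: "real \<Rightarrow> real \<Rightarrow> bool" where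
  "casino_wins x y \<longleftrightarrow> x * y \<in> {1..<4} \<union> {10..<40}"

definition Pwin :: "real pmf \<Rightarrow> real pmf \<Rightarrow> real" where
  "Pwin \<mu> \<nu> = (\<Sum>\<^sub>\<infinity>(x, y)\<in>decX \<times> decX.
      pmf \<mu> x * pmf \<nu> y * (if casino_wins x y then 1 else 0))"

definition beta :: "nat \<Rightarrow> real pmf" where
  "beta n = embed_pmf (\<lambda>x. if x \<in> decXn n
      then log 10 (x + 10 powr (- real (n - 1))) - log 10 x else 0)"

end

theory Submission
  imports Defs
begin

(*
  For a fixed y in [1,10) the casino wins exactly when x < 4/y, or x < 40/y but not
  x < 10/y.  The beta_n-mass of {x < c} telescopes to log10 of c clamped to [1,10], up to
  an error 1/M, and the three clamped logarithms always combine to log10 4.  Hence beta_n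
  wins against every y with probability within 2/M of log10 4.

  Next P(mu,nu)
  is written as an iterated average and shown to be symmetric (the winning rule is), so
  beta_n is within 2/M of log10 4 against every mixed strategy on either side.
*)

section \<open>Terminating decimals as scaled integers\<close>

definition digits_value :: "nat \<Rightarrow> (nat \<Rightarrow> nat) \<Rightarrow> nat" where
  "digits_value N d = (\<Sum>k=0..N. d k * 10 ^ (N - k))"

lemma digits_value_0 [simp]: "digits_value 0 d = d 0"
  by (simp add: digits_value_def)

lemma digits_value_Suc: "digits_value (Suc N) d = 10 * digits_value N d + d (Suc N)"
proof -
  have "(\<Sum>k=0..N. d k * 10 ^ (Suc N - k)) = 10 * (\<Sum>k=0..N. d k * 10 ^ (N - k))"
    by (simp add: sum_distrib_left Suc_diff_le mult_ac)
  then show ?thesis by (simp add: digits_value_def)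
qed

lemma decimal_sum_eq: "(\<Sum>k=0..N. real (d k) / 10 ^ k) = real (digits_value N d) / 10 ^ N"
proof (induction N)
  case (Suc N)
  then show ?case by (simp add: digits_value_Suc field_simps)
qed simp

lemma digits_value_bounds:
  assumes "\<forall>k. d k \<le> 9"
  shows "d 0 * 10 ^ N \<le> digits_value N d \<and> digits_value N d < (d 0 + 1) * 10 ^ N"
proof (induction N)
  case (Suc N)
  moreover have "d (Suc N) \<le> 9" using assms by simp
  ultimately show ?case by (simp add: digits_value_Suc)
qed simp

lemma digits_value_surj: "j < 10 ^ Suc N \<Longrightarrow> \<exists>d. (\<forall>k. d k \<le> 9) \<and> digits_value N d = j"
proof (induction N arbitrary: j)
  case 0
  then show ?case by (intro exI[of _ "\<lambda>_. j"]) simp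
next
  case (Suc N)
  have "j div 10 < 10 ^ Suc N" using Suc.prems by (simp add: less_mult_imp_div_less mult.commute)
  then obtain d where d: "\<forall>k. d k \<le> 9" "digits_value N d = j div 10" using Suc.IH by blast
  define d' where "d' = d(Suc N := j mod 10)"
  have "digits_value N d' = digits_value N d"
    unfolding digits_value_def d'_def by (intro sum.cong) auto
  then have "digits_value (Suc N) d' = j" using d by (simp add: digits_value_Suc d'_def)
  moreover have "\<forall>k. d' k \<le> 9" using d by (simp add: d'_def)
  ultimately show ?case by blast
qed

definition digit_scale :: "nat \<Rightarrow> nat" where
  "digit_scale n = 10 ^ (n - 1)"

lemma digit_scale_pos: "0 < digit_scale n"
  by (simp add: digit_scale_def)

lemma decXn_eq: "decXn n = (\<lambda>j. real j / digit_scale n) ` {digit_scale n..<10 * digit_scale n}"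
proof safe
  fix x assume "x \<in> decXn n"
  then obtain d where d: "\<forall>k. d k \<le> 9" "d 0 \<noteq> 0"
    and x: "x = (\<Sum>k=0..n-1. real (d k) / 10 ^ k)"
    by (auto simp: decXn_def)
  have lo: "10 ^ (n-1) \<le> d 0 * 10 ^ (n-1)"
    using d(2) by simp
  have hi: "(d 0 + 1) * 10 ^ (n-1) \<le> 10 * 10 ^ (n-1)"
    using d(1)[rule_format, of 0] by (intro mult_le_mono1) simp
  have "digits_value (n-1) d \<in> {digit_scale n..<10 * digit_scale n}"
    using digits_value_bounds[OF d(1), of "n-1"] lo hi
    unfolding digit_scale_def atLeastLessThan_iff by linarith
  moreover have "x = real (digits_value (n-1) d) / digit_scale n"
    using x decimal_sum_eq by (simp add: digit_scale_def)
  ultimately show "x \<in> (\<lambda>j. real j / digit_scale n) ` {digit_scale n..<10 * digit_scale n}" by blast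
next
  fix j :: nat assume j: "j \<in> {digit_scale n..<10 * digit_scale n}"
  then obtain d where d: "\<forall>k. d k \<le> 9" "digits_value (n-1) d = j"
    using digits_value_surj[of j "n-1"] by (auto simp: digit_scale_def)
  have "d 0 \<noteq> 0"
  proof
    assume "d 0 = 0"
    then have "digits_value (n-1) d < digit_scale n"
      using digits_value_bounds[OF d(1), of "n-1"] by (simp add: digit_scale_def)
    then show False using j d(2) by simp
  qed
  moreover have "real j / digit_scale n = (\<Sum>k=0..n-1. real (d k) / 10 ^ k)"
    using d decimal_sum_eq[of d "n-1"] by (simp add: digit_scale_def)
  ultimately show "real j / digit_scale n \<in> decXn n"
    unfolding decXn_def using d by blast
qed

lemma decXn_subset: "decXn n \<subseteq> decX"
  unfolding decXn_def decX_def by blast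

lemma decX_eq_Union: "decX = (\<Union>n. decXn n)"
proof -
  have "x \<in> decXn (Suc m)" if "x = (\<Sum>k=0..m. real (d k) / 10 ^ k)" "\<forall>k. d k \<le> 9" "d 0 \<noteq> 0"
    for x m d
    using that unfolding decXn_def by auto
  then show ?thesis using decXn_subset unfolding decX_def by blast
qed

lemma finite_decXn: "finite (decXn n)"
  unfolding decXn_eq by simp

lemma countable_decX: "countable decX"
  unfolding decX_eq_Union by (intro countable_UN) (auto intro: countable_finite finite_decXn)

lemma decX_bounds:
  assumes "x \<in> decX"
  shows "1 \<le> x \<and> x < 10"
proof -
  obtain n j where j: "digit_scale n \<le> j" "j < 10 * digit_scale n" and x: "x = real j / digit_scale n"
    using assms unfolding decX_eq_Union decXn_eq by auto
  have "real (digit_scale n) \<le> real j" "real j < real (10 * digit_scale n)"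
    using j by (simp_all only: of_nat_le_iff of_nat_less_iff)
  then show ?thesis using x digit_scale_pos[of n] by (simp add: le_divide_eq divide_less_eq)
qed

lemma sum_decXn:
  "(\<Sum>x\<in>decXn n. f x) = (\<Sum>j\<in>{digit_scale n..<10 * digit_scale n}. f (real j / digit_scale n))"
proof -
  have "inj_on (\<lambda>j. real j / real (digit_scale n)) A" for A
    using digit_scale_pos[of n] by (intro inj_onI) (simp add: field_simps)
  then show ?thesis unfolding decXn_eq by (subst sum.reindex) simp_all
qed

section \<open>Telescoping logarithmic masses\<close>

definition log_gap :: "nat \<Rightarrow> nat \<Rightarrow> real" where
  "log_gap M j = log 10 (real (Suc j) / M) - log 10 (real j / M)"

lemma log_gap_nonneg: "0 < M \<Longrightarrow> 0 < j \<Longrightarrow> 0 \<le> log_gap M j"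
  unfolding log_gap_def by (simp add: divide_right_mono)

lemma log_gap_telescope:
  assumes "0 < M" "M \<le> p"
  shows "(\<Sum>j\<in>{M..<p}. log_gap M j) = log 10 (real p / M)"
  using sum_Suc_diff'[OF assms(2), of "\<lambda>i. log 10 (real i / M)"] assms
  by (simp add: log_gap_def)

text \<open>Since ln 10 \<ge> 1, a step of size \<delta> beyond 1 raises log10 by at most \<delta>.\<close>
lemma log10_add_le:
  assumes "1 \<le> a" "0 \<le> \<delta>"
  shows "log 10 (a + \<delta>) \<le> log 10 a + \<delta>"
proof -
  have ln10: "1 \<le> ln (10::real)"
    using ln_ge_iff[of 10 1] exp_le by simp
  have "ln (a + \<delta>) - ln a = ln ((a + \<delta>) / a)" using assms by (simp add: ln_div)
  also have "\<dots> \<le> (a + \<delta>) / a - 1" using assms by (intro ln_le_minus_one) auto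
  also have "\<dots> = \<delta> / a" using assms by (simp add: field_simps)
  also have "\<dots> \<le> \<delta>" using assms mult_left_mono[OF assms] by (simp add: divide_le_eq)
  also have "\<dots> \<le> \<delta> * ln 10" using assms ln10 mult_left_mono[OF ln10, of \<delta>] by simp
  finally show ?thesis using ln10 unfolding log_def by (simp add: field_simps)
qed

definition clamp10 :: "real \<Rightarrow> real" where
  "clamp10 c = max 1 (min 10 c)"

text \<open>The points j / M of [1,10) lying below c are exactly those with M \<le> j < p, where
  p is the clamped ceiling of c M; so their total Benford weight telescopes.\<close>
lemma log_mass_below_eq:
  fixes M :: nat and c :: real
  assumes "0 < M"
  shows "(\<Sum>j\<in>{j\<in>{M..<10*M}. real j / M < c}. log_gap M j)
         = log 10 (real (max M (min (10 * M) (nat \<lceil>c * M\<rceil>))) / M)"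
proof -
  define q where "q = nat \<lceil>c * M\<rceil>"
  define p where "p = max M (min (10 * M) q)"
  have below_iff: "real j / M < c \<longleftrightarrow> j < q" for j
  proof -
    have "real j / M < c \<longleftrightarrow> int j < \<lceil>c * M\<rceil>"
      using assms by (simp add: divide_less_eq less_ceiling_iff)
    then show ?thesis unfolding q_def by linarith
  qed
  have in_p: "j \<in> {M..<p} \<longleftrightarrow> M \<le> j \<and> j < 10 * M \<and> j < q" for j
    unfolding p_def atLeastLessThan_iff less_max_iff_disj min_less_iff_conj by auto
  have "{j\<in>{M..<10*M}. real j / M < c} = {M..<p}"
  proof (rule set_eqI)
    fix j
    show "j \<in> {j\<in>{M..<10*M}. real j / M < c} \<longleftrightarrow> j \<in> {M..<p}"
      unfolding in_p unfolding mem_Collect_eq atLeastLessThan_iff below_iff by simp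
  qed
  then show ?thesis
    unfolding p_def q_def using assms by (simp add: log_gap_telescope)
qed

text \<open>Hence the total Benford weight of the points below c is log10 (clamp10 c), up to an
  error of at most 1/M coming from the rounding of c M.\<close>
lemma log_mass_below:
  fixes M :: nat and c :: real
  assumes "0 < M"
  defines "S \<equiv> (\<Sum>j\<in>{j\<in>{M..<10*M}. real j / M < c}. log_gap M j)"
  shows "log 10 (clamp10 c) \<le> S \<and> S \<le> log 10 (clamp10 c) + 1 / M"
proof -
  define p where "p = max M (min (10 * M) (nat \<lceil>c * M\<rceil>))"
  have Mpos: "0 < real M" using assms by simp
  have p_real: "real p = max M (min (10 * M) (max 0 (real_of_int \<lceil>c * M\<rceil>)))"
    unfolding p_def by simp
  have ceiling: "c * M \<le> real_of_int \<lceil>c * M\<rceil>" "real_of_int \<lceil>c * M\<rceil> < c * M + 1"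
    by linarith+
  have clamp_M: "clamp10 c * M = max M (min (10 * M) (c * M))"
    unfolding clamp10_def using Mpos by (simp add: max_mult_distrib_right min_mult_distrib_right)
  have "clamp10 c * M \<le> real p" "real p \<le> clamp10 c * M + 1"
    unfolding p_real clamp_M using ceiling Mpos by linarith+
  then have lo: "clamp10 c \<le> real p / M" and hi: "real p / M \<le> clamp10 c + 1 / M"
    using Mpos by (simp_all add: le_divide_eq divide_le_eq distrib_right)
  have clamp_ge_1: "1 \<le> clamp10 c" by (simp add: clamp10_def)
  have "log 10 (clamp10 c) \<le> log 10 (real p / M)"
    using lo clamp_ge_1 by (intro log_mono) auto
  moreover have "log 10 (real p / M) \<le> log 10 (clamp10 c + 1 / M)"
    using hi lo clamp_ge_1 by (intro log_mono) auto
  moreover have "log 10 (clamp10 c + 1 / M) \<le> log 10 (clamp10 c) + 1 / M"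
    using clamp_ge_1 by (intro log10_add_le) auto
  moreover have "S = log 10 (real p / M)"
    unfolding S_def p_def using log_mass_below_eq[OF assms(1)] .
  ultimately show ?thesis by linarith
qed

section \<open>The winning probability of the Benford strategy against a fixed number\<close>

definition win :: "real \<Rightarrow> real \<Rightarrow> real" where
  "win x y = (if casino_wins x y then 1 else 0)"

lemma win_bounds: "0 \<le> win x y \<and> win x y \<le> 1"
  by (simp add: win_def)

lemma win_commute: "win x y = win y x"
  by (simp add: win_def casino_wins_def mult.commute)

text \<open>For x, y in [1,10) we have xy in [1,100), so the casino wins iff
  xy < 4 or 10 \<le> xy < 40; as a combination of threshold indicators in x:\<close>
lemma win_thresholds:
  assumes "1 \<le> x" "x < 10" "1 \<le> y" "y < 10"
  shows "win x y = (if x < 4/y then 1 else 0) + (if x < 40/y then 1 else 0)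
                   - (if x < 10/y then 1 else 0)"
proof -
  have "0 < y" using assms by simp
  then have thresholds: "x < c / y \<longleftrightarrow> x * y < c" for c
    by (simp add: less_divide_eq)
  have "1 \<le> x * y" using mult_mono[of 1 x 1 y] assms by simp
  then show ?thesis unfolding thresholds win_def casino_wins_def by auto
qed

lemma clamp10_thresholds:
  assumes "1 \<le> y" "y < 10"
  shows "log 10 (clamp10 (4/y)) + log 10 (clamp10 (40/y)) - log 10 (clamp10 (10/y))
         = log 10 4"
proof -
  have y: "0 < y" using assms by simp
  have c10: "clamp10 (10/y) = 10/y"
    unfolding clamp10_def using assms y by (simp add: le_divide_eq divide_le_eq)
  show ?thesis
  proof (cases "y \<le> 4")
    case True
    then have "clamp10 (4/y) = 4/y" "clamp10 (40/y) = 10"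
      unfolding clamp10_def using y assms by (simp_all add: le_divide_eq divide_le_eq)
    then show ?thesis using c10 y by (simp add: log_divide)
  next
    case False
    then have "clamp10 (4/y) = 1" "clamp10 (40/y) = 40/y"
      unfolding clamp10_def using y assms by (simp_all add: le_divide_eq divide_le_eq)
    moreover have "log 10 (40/y) = log 10 4 + log 10 (10/y)"
      using y log_mult[of 10 4 "10/y"] by simp
    ultimately show ?thesis using c10 by simp
  qed
qed

lemma benford_win_mass:
  assumes "0 < M" "1 \<le> y" "y < 10"
  shows "\<bar>(\<Sum>j\<in>{M..<10*M}. log_gap M j * win (real j / M) y) - log 10 4\<bar> \<le> 2 / M"
proof -
  define S where "S c = (\<Sum>j\<in>{j\<in>{M..<10*M}. real j / M < c}. log_gap M j)" for c
  have "(\<Sum>j\<in>{M..<10*M}. log_gap M j * win (real j / M) y)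
      = (\<Sum>j\<in>{M..<10*M}. (if real j / M < 4/y then log_gap M j else 0)
          + (if real j / M < 40/y then log_gap M j else 0)
          - (if real j / M < 10/y then log_gap M j else 0))"
  proof (rule sum.cong[OF refl])
    fix j assume "j \<in> {M..<10*M}"
    then have "1 \<le> real j / M" "real j / M < 10"
      using assms by (simp_all add: le_divide_eq divide_less_eq)
    then show "log_gap M j * win (real j / M) y = (if real j / M < 4/y then log_gap M j else 0)
          + (if real j / M < 40/y then log_gap M j else 0)
          - (if real j / M < 10/y then log_gap M j else 0)"
      using win_thresholds[of "real j / M" y] assms by simp
  qed
  also have "\<dots> = S (4/y) + S (40/y) - S (10/y)"
    unfolding S_def sum.inter_filter[OF finite_atLeastLessThan]
    by (simp add: sum.distrib sum_subtractf)
  finally have sum_eq: "(\<Sum>j\<in>{M..<10*M}. log_gap M j * win (real j / M) y)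
      = S (4/y) + S (40/y) - S (10/y)" .
  have bounds: "log 10 (clamp10 c) \<le> S c \<and> S c \<le> log 10 (clamp10 c) + 1 / M" for c
    unfolding S_def by (rule log_mass_below[OF assms(1)])
  show ?thesis
    unfolding sum_eq abs_le_iff
    using bounds[of "4/y"] bounds[of "40/y"] bounds[of "10/y"] clamp10_thresholds[OF assms(2,3)]
    by linarith
qed

lemma beta_density_eq:
  "j \<in> {digit_scale n..<10 * digit_scale n} \<Longrightarrow>
   log 10 (real j / digit_scale n + 10 powr (- real (n - 1))) - log 10 (real j / digit_scale n)
   = log_gap (digit_scale n) j"
proof -
  have "10 powr (- real (n - 1)) = 1 / real (digit_scale n)"
    unfolding digit_scale_def by (simp add: powr_minus powr_realpow divide_inverse)
  then have "real j / digit_scale n + 10 powr (- real (n - 1)) = real (Suc j) / digit_scale n"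
    by (simp add: add_divide_distrib)
  then show ?thesis unfolding log_gap_def by simp
qed

lemma beta_weighted_sum:
  "(\<Sum>x\<in>decXn n. (if x \<in> decXn n then log 10 (x + 10 powr (- real (n - 1))) - log 10 x else 0) * f x)
   = (\<Sum>j\<in>{digit_scale n..<10 * digit_scale n}. log_gap (digit_scale n) j * f (real j / digit_scale n))"
  unfolding sum_decXn using beta_density_eq by (intro sum.cong) (auto simp: decXn_eq)

text \<open>The weights defining beta n are nonnegative and sum to 1 (by telescoping), so they
  are exactly its probability masses.\<close>
lemma pmf_beta:
  "pmf (beta n) x = (if x \<in> decXn n then log 10 (x + 10 powr (- real (n - 1))) - log 10 x else 0)"
proof -
  define b where "b x = (if x \<in> decXn n then log 10 (x + 10 powr (- real (n - 1))) - log 10 x else 0)"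
    for x
  have b_nonneg: "0 \<le> b x" for x
  proof (cases "x \<in> decXn n")
    case True
    then obtain j where j: "j \<in> {digit_scale n..<10 * digit_scale n}" "x = real j / digit_scale n"
      unfolding decXn_eq by blast
    then have "b x = log_gap (digit_scale n) j"
      using True beta_density_eq unfolding b_def by simp
    moreover have "0 < j" using j(1) digit_scale_pos[of n] by simp
    ultimately show ?thesis using log_gap_nonneg[OF digit_scale_pos] by simp
  qed (simp add: b_def)
  have "(\<Sum>x\<in>decXn n. b x) = (\<Sum>j\<in>{digit_scale n..<10 * digit_scale n}. log_gap (digit_scale n) j)"
    using beta_weighted_sum[of n "\<lambda>_. 1"] unfolding b_def by simp
  also have "\<dots> = 1"
    using digit_scale_pos[of n] by (subst log_gap_telescope) auto
  finally have sum_b: "(\<Sum>x\<in>decXn n. b x) = 1" .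
  have "(\<integral>\<^sup>+x. ennreal (b x) \<partial>count_space UNIV) = (\<Sum>x\<in>decXn n. ennreal (b x))"
    by (rule nn_integral_count_space') (auto simp: finite_decXn b_def)
  also have "\<dots> = 1"
    using b_nonneg sum_b by (subst sum_ennreal) simp_all
  finally have "(\<integral>\<^sup>+x. ennreal (b x) \<partial>count_space UNIV) = 1" .
  then show ?thesis
    using b_nonneg pmf_embed_pmf[of b] unfolding beta_def b_def by simp
qed

lemma beta_probsX: "beta n \<in> probsX"
  by (auto simp: probsX_def set_pmf_eq pmf_beta split: if_splits intro: subsetD[OF decXn_subset])

lemma beta_expectation:
  "infsetsum (\<lambda>x. pmf (beta n) x * f x) decX
   = (\<Sum>j\<in>{digit_scale n..<10 * digit_scale n}. log_gap (digit_scale n) j * f (real j / digit_scale n))"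
proof -
  have "infsetsum (\<lambda>x. pmf (beta n) x * f x) decX = infsetsum (\<lambda>x. pmf (beta n) x * f x) (decXn n)"
    by (intro infsetsum_cong_neutral) (auto simp: pmf_beta intro: subsetD[OF decXn_subset])
  then show ?thesis
    using finite_decXn beta_weighted_sum unfolding pmf_beta by simp
qed

lemma beta_win_probability:
  assumes "y \<in> decX"
  shows "\<bar>infsetsum (\<lambda>x. pmf (beta n) x * win x y) decX - log 10 4\<bar> \<le> 2 / digit_scale n"
  unfolding beta_expectation using benford_win_mass[OF digit_scale_pos] decX_bounds[OF assms] by simp

section \<open>The payoff as an iterated average\<close>

lemma pmf_weighted_summable:
  assumes "\<And>y. y \<in> A \<Longrightarrow> \<bar>h y\<bar> \<le> C"
  shows "Infinite_Set_Sum.abs_summable_on (\<lambda>y. pmf p y * h y) A"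
proof (rule abs_summable_on_comparison_test')
  show "Infinite_Set_Sum.abs_summable_on (\<lambda>y. pmf p y * C) A"
    by (intro abs_summable_on_cmult_left pmf_abs_summable)
  show "norm (pmf p y * h y) \<le> pmf p y * C" if "y \<in> A" for y
    using assms[OF that] by (simp add: abs_mult mult_left_mono)
qed

lemma pmf_average_bounds:
  assumes "set_pmf p \<subseteq> A" "\<And>y. y \<in> A \<Longrightarrow> a \<le> g y \<and> g y \<le> b"
  shows "a \<le> infsetsum (\<lambda>y. pmf p y * g y) A \<and> infsetsum (\<lambda>y. pmf p y * g y) A \<le> b"
proof -
  have const: "infsetsum (\<lambda>y. pmf p y * c) A = c" for c
    using infsetsum_cmult_left[of c "pmf p" A] pmf_abs_summable[of p A] infsetsum_pmf_eq_1[OF assms(1)]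
    by simp
  have g: "\<bar>g y\<bar> \<le> \<bar>a\<bar> + \<bar>b\<bar>" if "y \<in> A" for y
    using assms(2)[OF that] by linarith
  have "infsetsum (\<lambda>y. pmf p y * a) A \<le> infsetsum (\<lambda>y. pmf p y * g y) A"
    "infsetsum (\<lambda>y. pmf p y * g y) A \<le> infsetsum (\<lambda>y. pmf p y * b) A"
    using assms(2) g by (intro infsetsum_mono pmf_weighted_summable mult_left_mono; fastforce)+
  then show ?thesis by (simp add: const)
qed

lemma Pwin_summable:
  "Infinite_Set_Sum.abs_summable_on (\<lambda>(x, y). pmf \<mu> x * pmf \<nu> y * win x y) (decX \<times> decX)"
proof (rule abs_summable_on_comparison_test'[OF abs_summable_on_product[OF
      countable_decX countable_decX pmf_abs_summable pmf_abs_summable]])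
  fix z show "norm ((\<lambda>(x, y). pmf \<mu> x * pmf \<nu> y * win x y) z) \<le> (\<lambda>(x, y). pmf \<mu> x * pmf \<nu> y) z"
    using win_bounds by (cases z) (simp add: abs_mult mult_left_le)
qed

lemma Pwin_iterated:
  "Pwin \<mu> \<nu> = infsetsum (\<lambda>y. pmf \<nu> y * infsetsum (\<lambda>x. pmf \<mu> x * win x y) decX) decX"
proof -
  have "Pwin \<mu> \<nu> = infsetsum (\<lambda>(x, y). pmf \<mu> x * pmf \<nu> y * win x y) (decX \<times> decX)"
    unfolding Pwin_def win_def[symmetric] using infsetsum_infsum[OF Pwin_summable] by simp
  also have "\<dots> = infsetsum (\<lambda>y. infsetsum (\<lambda>x. pmf \<nu> y * (pmf \<mu> x * win x y)) decX) decX"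
    using infsetsum_swap[OF countable_decX countable_decX Pwin_summable, of \<mu> \<nu>]
      infsetsum_Times'[OF countable_decX countable_decX Pwin_summable, of \<mu> \<nu>]
    by (simp add: mult_ac)
  also have "\<dots> = infsetsum (\<lambda>y. pmf \<nu> y * infsetsum (\<lambda>x. pmf \<mu> x * win x y) decX) decX"
    by (subst infsetsum_cmult_right)
      (auto intro!: pmf_weighted_summable[where C = 1] simp: win_def)
  finally show ?thesis .
qed

text \<open>The game is symmetric, because the winning rule depends only on the product.\<close>
lemma Pwin_commute: "Pwin \<mu> \<nu> = Pwin \<nu> \<mu>"
proof -
  have "Pwin \<nu> \<mu> = infsum (\<lambda>(x, y). pmf \<nu> x * pmf \<mu> y * win x y) (prod.swap ` (decX \<times> decX))"
    unfolding Pwin_def win_def product_swap ..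
  also have "\<dots> = infsum (\<lambda>(x, y). pmf \<mu> x * pmf \<nu> y * win x y) (decX \<times> decX)"
    by (subst infsum_reindex) (simp_all add: o_def case_prod_unfold mult_ac win_commute)
  also have "\<dots> = Pwin \<mu> \<nu>"
    unfolding Pwin_def win_def ..
  finally show ?thesis ..
qed

lemma Pwin_bounds:
  assumes "\<mu> \<in> probsX" "\<nu> \<in> probsX"
  shows "0 \<le> Pwin \<mu> \<nu> \<and> Pwin \<mu> \<nu> \<le> 1"
proof -
  have inner: "0 \<le> infsetsum (\<lambda>x. pmf \<mu> x * win x y) decX \<and> infsetsum (\<lambda>x. pmf \<mu> x * win x y) decX \<le> 1"
    for y
    by (rule pmf_average_bounds) (use assms(1) win_bounds in \<open>auto simp: probsX_def\<close>)
  show ?thesis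
    unfolding Pwin_iterated by (rule pmf_average_bounds) (use assms(2) inner in \<open>auto simp: probsX_def\<close>)
qed

lemma Pwin_beta:
  assumes "\<nu> \<in> probsX"
  shows "\<bar>Pwin (beta n) \<nu> - log 10 4\<bar> \<le> 2 / digit_scale n"
proof -
  have inner: "log 10 4 - 2 / digit_scale n \<le> infsetsum (\<lambda>x. pmf (beta n) x * win x y) decX
      \<and> infsetsum (\<lambda>x. pmf (beta n) x * win x y) decX \<le> log 10 4 + 2 / digit_scale n"
    if "y \<in> decX" for y
    using beta_win_probability[OF that, of n] by linarith
  have "log 10 4 - 2 / digit_scale n \<le> Pwin (beta n) \<nu> \<and> Pwin (beta n) \<nu> \<le> log 10 4 + 2 / digit_scale n"
    unfolding Pwin_iterated
    by (rule pmf_average_bounds) (use assms inner in \<open>auto simp: probsX_def\<close>)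
  then show ?thesis by linarith
qed

lemma digit_scale_large:
  assumes "0 < \<epsilon>"
  shows "\<exists>N. \<forall>n\<ge>N. 2 / real (digit_scale n) \<le> \<epsilon>"
proof -
  obtain N :: nat where N: "2 / \<epsilon> < N" using reals_Archimedean2 by blast
  have "2 / real (digit_scale n) \<le> \<epsilon>" if "Suc N \<le> n" for n
  proof -
    have "n - 1 < 2 ^ (n - 1)" by (rule less_exp)
    also have "(2::nat) ^ (n - 1) \<le> 10 ^ (n - 1)" by (rule power_mono) auto
    finally have "2 / \<epsilon> < real (digit_scale n)" using that N unfolding digit_scale_def by linarith
    then show ?thesis using assms digit_scale_pos[of n] by (simp add: field_simps)
  qed
  then show ?thesis by blast
qed

lemma beta_approximately_optimal:
  assumes "0 < \<epsilon>"
  shows "\<exists>N. \<forall>n\<ge>N. (\<forall>\<nu>\<in>probsX. Pwin (beta n) \<nu> \<ge> log 10 4 - \<epsilon>)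
                   \<and> (\<forall>\<mu>\<in>probsX. Pwin \<mu> (beta n) \<le> log 10 4 + \<epsilon>)"
proof -
  obtain N where N: "\<forall>n\<ge>N. 2 / real (digit_scale n) \<le> \<epsilon>" using digit_scale_large[OF assms] by blast
  have "log 10 4 - \<epsilon> \<le> Pwin (beta n) \<nu> \<and> Pwin \<nu> (beta n) \<le> log 10 4 + \<epsilon>"
    if "N \<le> n" "\<nu> \<in> probsX" for n \<nu>
  proof -
    have "2 / real (digit_scale n) \<le> \<epsilon>" using N that(1) by blast
    then show ?thesis
      using Pwin_beta[OF that(2), of n] Pwin_commute[of \<nu> "beta n"] by (auto simp: abs_le_iff)
  qed
  then show ?thesis by blast
qed

section \<open>Games with approximate saddle points\<close>

lemma sup_inf_le_inf_sup:
  fixes P :: "'a \<Rightarrow> 'b \<Rightarrow> real"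
  assumes "A \<noteq> {}" "B \<noteq> {}" and bounded: "\<And>\<mu> \<nu>. \<mu> \<in> A \<Longrightarrow> \<nu> \<in> B \<Longrightarrow> a \<le> P \<mu> \<nu> \<and> P \<mu> \<nu> \<le> b"
  shows "(SUP \<mu>\<in>A. INF \<nu>\<in>B. P \<mu> \<nu>) \<le> (INF \<nu>\<in>B. SUP \<mu>\<in>A. P \<mu> \<nu>)"
proof (intro cSUP_least cINF_greatest assms(1,2))
  fix \<mu> \<nu> assume "\<mu> \<in> A" "\<nu> \<in> B"
  have row_bdd: "bdd_below (P \<mu> ` B)"
    using bounded[OF \<open>\<mu> \<in> A\<close>] by (intro bdd_belowI2[where m = a]) blast
  have col_bdd: "bdd_above ((\<lambda>\<mu>. P \<mu> \<nu>) ` A)"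
    using bounded[OF _ \<open>\<nu> \<in> B\<close>] by (intro bdd_aboveI2[where M = b]) blast
  have "(INF \<nu>\<in>B. P \<mu> \<nu>) \<le> P \<mu> \<nu>" using row_bdd \<open>\<nu> \<in> B\<close> by (rule cINF_lower)
  also have "\<dots> \<le> (SUP \<mu>\<in>A. P \<mu> \<nu>)" using \<open>\<mu> \<in> A\<close> col_bdd by (rule cSUP_upper)
  finally show "(INF \<nu>\<in>B. P \<mu> \<nu>) \<le> (SUP \<mu>\<in>A. P \<mu> \<nu>)" .
qed

lemma game_value_from_approximate_saddle_points:
  fixes P :: "'a \<Rightarrow> 'b \<Rightarrow> real"
  assumes bounded: "\<And>\<mu> \<nu>. \<mu> \<in> A \<Longrightarrow> \<nu> \<in> B \<Longrightarrow> a \<le> P \<mu> \<nu> \<and> P \<mu> \<nu> \<le> b"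
    and lower: "\<And>\<epsilon>. 0 < \<epsilon> \<Longrightarrow> \<exists>\<sigma>\<in>A. \<forall>\<nu>\<in>B. L - \<epsilon> \<le> P \<sigma> \<nu>"
    and upper: "\<And>\<epsilon>. 0 < \<epsilon> \<Longrightarrow> \<exists>\<tau>\<in>B. \<forall>\<mu>\<in>A. P \<mu> \<tau> \<le> L + \<epsilon>"
  shows "(SUP \<mu>\<in>A. INF \<nu>\<in>B. P \<mu> \<nu>) = L \<and> (INF \<nu>\<in>B. SUP \<mu>\<in>A. P \<mu> \<nu>) = L"
proof -
  obtain \<sigma>0 \<tau>0 where "\<sigma>0 \<in> A" "\<tau>0 \<in> B" using lower[of 1] upper[of 1] by auto
  then have "A \<noteq> {}" "B \<noteq> {}" by auto
  have row_bdd: "bdd_below (P \<mu> ` B)" if "\<mu> \<in> A" for \<mu>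
    using bounded[OF that] by (intro bdd_belowI2[where m = a]) blast
  have col_bdd: "bdd_above ((\<lambda>\<mu>. P \<mu> \<nu>) ` A)" if "\<nu> \<in> B" for \<nu>
    using bounded[OF _ that] by (intro bdd_aboveI2[where M = b]) blast
  have "(INF \<nu>\<in>B. P \<mu> \<nu>) \<le> b" if "\<mu> \<in> A" for \<mu>
    using cINF_lower[OF row_bdd[OF that] \<open>\<tau>0 \<in> B\<close>] bounded[OF that \<open>\<tau>0 \<in> B\<close>] by linarith
  then have lower_bdd: "bdd_above ((\<lambda>\<mu>. INF \<nu>\<in>B. P \<mu> \<nu>) ` A)"
    by (intro bdd_aboveI2)
  have "a \<le> (SUP \<mu>\<in>A. P \<mu> \<nu>)" if "\<nu> \<in> B" for \<nu>
    using cSUP_upper[OF \<open>\<sigma>0 \<in> A\<close> col_bdd[OF that]] bounded[OF \<open>\<sigma>0 \<in> A\<close> that] by linarith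
  then have upper_bdd: "bdd_below ((\<lambda>\<nu>. SUP \<mu>\<in>A. P \<mu> \<nu>) ` B)"
    by (intro bdd_belowI2)
  have lower_eps: "L \<le> (SUP \<mu>\<in>A. INF \<nu>\<in>B. P \<mu> \<nu>) + \<epsilon>" if eps: "0 < \<epsilon>" for \<epsilon>
  proof -
    obtain \<sigma> where "\<sigma> \<in> A" and \<sigma>: "\<forall>\<nu>\<in>B. L - \<epsilon> \<le> P \<sigma> \<nu>" using lower[OF eps] by blast
    have "L - \<epsilon> \<le> (INF \<nu>\<in>B. P \<sigma> \<nu>)" using \<open>B \<noteq> {}\<close> \<sigma> by (intro cINF_greatest) auto
    also have "\<dots> \<le> (SUP \<mu>\<in>A. INF \<nu>\<in>B. P \<mu> \<nu>)" using \<open>\<sigma> \<in> A\<close> lower_bdd by (rule cSUP_upper)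
    finally show ?thesis by simp
  qed
  have upper_eps: "(INF \<nu>\<in>B. SUP \<mu>\<in>A. P \<mu> \<nu>) \<le> L + \<epsilon>" if eps: "0 < \<epsilon>" for \<epsilon>
  proof -
    obtain \<tau> where "\<tau> \<in> B" and \<tau>: "\<forall>\<mu>\<in>A. P \<mu> \<tau> \<le> L + \<epsilon>" using upper[OF eps] by blast
    have "(INF \<nu>\<in>B. SUP \<mu>\<in>A. P \<mu> \<nu>) \<le> (SUP \<mu>\<in>A. P \<mu> \<tau>)" using upper_bdd \<open>\<tau> \<in> B\<close> by (rule cINF_lower)
    also have "\<dots> \<le> L + \<epsilon>" using \<open>A \<noteq> {}\<close> \<tau> by (intro cSUP_least) auto
    finally show ?thesis .
  qed
  have "L \<le> (SUP \<mu>\<in>A. INF \<nu>\<in>B. P \<mu> \<nu>)" using lower_eps by (rule field_le_epsilon)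
  moreover have "(INF \<nu>\<in>B. SUP \<mu>\<in>A. P \<mu> \<nu>) \<le> L" using upper_eps by (rule field_le_epsilon)
  ultimately show ?thesis
    using sup_inf_le_inf_sup[where P = P, OF \<open>A \<noteq> {}\<close> \<open>B \<noteq> {}\<close> bounded] by linarith
qed

theorem mainTheorem2:
  shows "(SUP \<mu>\<in>probsX. INF \<nu>\<in>probsX. Pwin \<mu> \<nu>) = log 10 4
       \<and> (INF \<nu>\<in>probsX. SUP \<mu>\<in>probsX. Pwin \<mu> \<nu>) = log 10 4
       \<and> (\<forall>\<epsilon>>0. \<exists>N. \<forall>n\<ge>N.
            (\<forall>\<nu>\<in>probsX. Pwin (beta n) \<nu> \<ge> log 10 4 - \<epsilon>)
          \<and> (\<forall>\<mu>\<in>probsX. Pwin \<mu> (beta n) \<le> log 10 4 + \<epsilon>))"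
proof -
  have "\<exists>\<beta>\<in>probsX. \<forall>\<nu>\<in>probsX. log 10 4 - \<epsilon> \<le> Pwin \<beta> \<nu>"
    and "\<exists>\<beta>\<in>probsX. \<forall>\<mu>\<in>probsX. Pwin \<mu> \<beta> \<le> log 10 4 + \<epsilon>" if "0 < \<epsilon>" for \<epsilon>
    using beta_approximately_optimal[OF that] beta_probsX by blast+
  then have "(SUP \<mu>\<in>probsX. INF \<nu>\<in>probsX. Pwin \<mu> \<nu>) = log 10 4
           \<and> (INF \<nu>\<in>probsX. SUP \<mu>\<in>probsX. Pwin \<mu> \<nu>) = log 10 4"
    using Pwin_bounds by (intro game_value_from_approximate_saddle_points[where a = 0 and b = 1])
  then show ?thesis
    using beta_approximately_optimal by blast
qed

end
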